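(* Let $E$ be a finite-dimensional real Euclidean space with inner product $\langle\cdot,\cdot\rangle$, let $\|\cdot\|_{(1)},\dots,\|\cdot\|_{(n)}$ be norms on $E$, and for each $i$ let $\mathrm{LMO}_i$ be a linear minimization oracle for the unit ball of $\|\cdot\|_{(i)}$, i.e. $\mathrm{LMO}_i(\mathbf{M})\in\arg\min_{\|\mathbf{D}\|_{(i)}\le1}\langle\mathbf{M},\mathbf{D}\rangle$. Consider the LMO-based algorithms $\mathbf{X}^{t+1}-\mathbf{X}^t=\gamma_t\,\mathrm{LMO}_i(\mathbf{M}^t)$, $i=1,\dots,n$. For arbitrary $\alpha_1,\dots,\alpha_n\ge 0$, not all zero, the algorithm with update $$\mathbf{X}^{t+1}-\mathbf{X}^t=\gamma_t\sum_{i=1}^n\alpha_i\,\mathrm{LMO}_i(\mathbf{M}^t)$$ is itself an LMO-based algorithm: its update is $\mathbf{X}^{t+1}-\mathbf{X}^t=\gamma_t\,\mathrm{LMO}(\mathbf{M}^t)$ where $\mathrm{LMO}(\mathbf{M})\in\arg\min_{\|\mathbf{D}\|\le1}\langle\mathbf{M},\mathbf{D}\rangle$ is a linear minimization oracle for the unit ball of the norm $\|\cdot\|$ dual to $\sum_{i=1}^n\alpha_i\|\cdot\|_{(i)}^\dagger$.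
   Context: For a norm $\|\cdot\|$ on $E$, its dual norm is $\|\mathbf{M}\|^\dagger=\sup_{\|\mathbf{D}\|\le1}\langle\mathbf{M},\mathbf{D}\rangle$. Here $\mathbf{M}^t\in E$ denotes the effective update direction at iteration $t$ (e.g. a stochastic gradient or a momentum buffer) and $\gamma_t>0$ is the step size; an LMO-based algorithm is one whose update has the form $\mathbf{X}^{t+1}=\mathbf{X}^t+\gamma_t\,\mathrm{LMO}(\mathbf{M}^t)$ for an LMO over the unit ball of some norm. *)

theory Defs
  imports "HOL-Analysis.Analysis"
begin

definition is_norm :: "('a::euclidean_space \<Rightarrow> real) \<Rightarrow> bool" where
  "is_norm N \<longleftrightarrow>
     (\<forall>x. 0 \<le> N x) \<and> (\<forall>x. N x = 0 \<longleftrightarrow> x = 0) \<and>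
     (\<forall>c x. N (c *\<^sub>R x) = \<bar>c\<bar> * N x) \<and> (\<forall>x y. N (x + y) \<le> N x + N y)"

definition dual_norm :: "('a::euclidean_space \<Rightarrow> real) \<Rightarrow> 'a \<Rightarrow> real" where
  "dual_norm N M = Sup {M \<bullet> D | D. N D \<le> 1}"

definition is_LMO :: "('a::euclidean_space \<Rightarrow> real) \<Rightarrow> ('a \<Rightarrow> 'a) \<Rightarrow> bool" where
  "is_LMO N L \<longleftrightarrow> (\<forall>M. N (L M) \<le> 1 \<and> (\<forall>D. N D \<le> 1 \<longrightarrow> M \<bullet> L M \<le> M \<bullet> D))"

end

theory Submission
  imports Defs
begin

(* Let \<Phi> = \<Sum>i \<alpha>_i ||.||_(i)^dagger; as a nonnegative, nontrivial combination of norms it is a norm.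
   Each LMO_i attains the dual norm, <M, LMO_i M> = - ||M||_(i)^dagger, so the combined direction
   D = \<Sum>i \<alpha>_i LMO_i M satisfies <M, D> = - \<Phi> M, while <X, D> \<le> \<Phi> X for every X puts D in the
   unit ball of \<Phi>^dagger.  Hoelder's inequality <M, D'> \<ge> - \<Phi> M * \<Phi>^dagger D' shows that no
   point D' of that ball does better.  Dual norms are finite because in finite dimension every
   norm dominates a multiple of the Euclidean one, by compactness of the sphere. *)

lemma
  assumes "is_norm N"
  shows is_norm_nonneg: "0 \<le> N x"
    and is_norm_eq_0_iff: "N x = 0 \<longleftrightarrow> x = 0"
    and is_norm_scaleR: "N (c *\<^sub>R x) = \<bar>c\<bar> * N x"
    and is_norm_triangle: "N (x + y) \<le> N x + N y"
  using assms unfolding is_norm_def by auto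

lemma is_norm_zero: "is_norm N \<Longrightarrow> N 0 = 0"
  by (simp add: is_norm_eq_0_iff)

lemma is_norm_minus: "is_norm N \<Longrightarrow> N (- x) = N x"
  using is_norm_scaleR[of N "-1" x] by simp

lemma is_norm_pos: "is_norm N \<Longrightarrow> x \<noteq> 0 \<Longrightarrow> 0 < N x"
  using is_norm_nonneg[of N x] is_norm_eq_0_iff[of N x] by linarith

lemma is_norm_normalize: "is_norm N \<Longrightarrow> x \<noteq> 0 \<Longrightarrow> N ((1 / N x) *\<^sub>R x) = 1"
  using is_norm_pos[of N x] by (simp add: is_norm_scaleR)

lemma is_norm_sum_le:
  assumes "is_norm N" and "finite A"
  shows "N (sum f A) \<le> (\<Sum>a\<in>A. N (f a))"
  using assms(2)
proof (induction A rule: finite_induct)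
  case empty
  then show ?case using is_norm_zero[OF assms(1)] by simp
next
  case (insert a A)
  then show ?case using is_norm_triangle[OF assms(1), of "f a" "sum f A"] by simp
qed

lemma is_norm_le_mult_norm:
  fixes N :: "'a::euclidean_space \<Rightarrow> real"
  assumes "is_norm N"
  shows "\<exists>C\<ge>0. \<forall>x. N x \<le> C * norm x"
proof (intro exI conjI allI)
  show "0 \<le> (\<Sum>b\<in>Basis. N b)" by (simp add: sum_nonneg is_norm_nonneg[OF assms])
  fix x :: 'a
  have "N x = N (\<Sum>b\<in>Basis. (x \<bullet> b) *\<^sub>R b)" by (simp add: euclidean_representation)
  also have "\<dots> \<le> (\<Sum>b\<in>Basis. \<bar>x \<bullet> b\<bar> * N b)"
    by (rule order_trans[OF is_norm_sum_le[OF assms finite_Basis]]) (simp add: is_norm_scaleR[OF assms])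
  also have "\<dots> \<le> (\<Sum>b\<in>Basis. norm x * N b)"
    by (intro sum_mono mult_right_mono) (simp_all add: Basis_le_norm is_norm_nonneg[OF assms])
  finally show "N x \<le> (\<Sum>b\<in>Basis. N b) * norm x" by (simp add: sum_distrib_left mult.commute)
qed

lemma is_norm_continuous_on:
  fixes N :: "'a::euclidean_space \<Rightarrow> real"
  assumes "is_norm N"
  shows "continuous_on S N"
proof -
  obtain C where "C \<ge> 0" and C: "\<And>x. N x \<le> C * norm x"
    using is_norm_le_mult_norm[OF assms] by blast
  have "C-lipschitz_on S N"
  proof (rule lipschitz_onI)
    fix x y :: 'a
    have "N x \<le> N (x - y) + N y" "N y \<le> N (x - y) + N x"
      using is_norm_triangle[OF assms, of "x - y" y] is_norm_triangle[OF assms, of "y - x" x]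
        is_norm_minus[OF assms, of "x - y"] by simp_all
    then show "dist (N x) (N y) \<le> C * dist x y"
      using C[of "x - y"] by (simp add: dist_real_def dist_norm abs_le_iff)
  qed fact
  then show ?thesis by (rule lipschitz_on_continuous_on)
qed

lemma is_norm_ge_mult_norm:
  fixes N :: "'a::euclidean_space \<Rightarrow> real"
  assumes "is_norm N"
  shows "\<exists>c>0. \<forall>x. c * norm x \<le> N x"
proof -
  have "sphere (0::'a) 1 \<noteq> {}" using vector_choose_size[of 1] by auto
  then obtain x0 :: 'a where "x0 \<in> sphere 0 1" and "\<forall>y\<in>sphere 0 1. N x0 \<le> N y"
    using continuous_attains_inf[OF compact_sphere _ is_norm_continuous_on[OF assms]] by blast
  then have x0: "norm x0 = 1" and min: "\<And>y. norm y = 1 \<Longrightarrow> N x0 \<le> N y" by auto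
  have "x0 \<noteq> 0" using x0 by auto
  then have "N x0 > 0" by (rule is_norm_pos[OF assms])
  moreover have "N x0 * norm x \<le> N x" for x
  proof (cases "x = 0")
    case False
    then have "N x0 \<le> N ((1 / norm x) *\<^sub>R x)" by (intro min) simp
    then show ?thesis using False by (simp add: is_norm_scaleR[OF assms] field_simps)
  qed (simp add: is_norm_zero[OF assms])
  ultimately show ?thesis by blast
qed

lemma bdd_above_inner_unit_ball:
  fixes N :: "'a::euclidean_space \<Rightarrow> real"
  assumes "is_norm N"
  shows "bdd_above {M \<bullet> D | D. N D \<le> 1}"
proof -
  obtain c where "c > 0" and c: "\<And>x. c * norm x \<le> N x" using is_norm_ge_mult_norm[OF assms] by blast
  have "M \<bullet> D \<le> norm M / c" if "N D \<le> 1" for D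
  proof -
    have "norm D \<le> 1 / c" using c[of D] that \<open>c > 0\<close> by (simp add: field_simps)
    then have "norm M * norm D \<le> norm M / c" using mult_left_mono[of _ _ "norm M"] by fastforce
    then show ?thesis using norm_cauchy_schwarz[of M D] by linarith
  qed
  then show ?thesis by (intro bdd_aboveI) blast
qed

lemma inner_le_dual_norm: "is_norm N \<Longrightarrow> N D \<le> 1 \<Longrightarrow> M \<bullet> D \<le> dual_norm N M"
  unfolding dual_norm_def by (rule cSup_upper) (auto intro: bdd_above_inner_unit_ball)

lemma dual_norm_le:
  assumes "is_norm N" and "\<And>D. N D \<le> 1 \<Longrightarrow> M \<bullet> D \<le> B"
  shows "dual_norm N M \<le> B"
  unfolding dual_norm_def
proof (rule cSup_least)
  have "N 0 \<le> 1" using is_norm_zero[OF assms(1)] by simp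
  then show "{M \<bullet> D | D. N D \<le> 1} \<noteq> {}" by blast
qed (use assms(2) in auto)

lemma dual_norm_nonneg: "is_norm N \<Longrightarrow> 0 \<le> dual_norm N M"
  using inner_le_dual_norm[of N 0 M] by (simp add: is_norm_zero)

lemma inner_le_dual_norm_mult:
  assumes "is_norm N"
  shows "M \<bullet> D \<le> dual_norm N M * N D"
proof (cases "D = 0")
  case False
  then have "M \<bullet> ((1 / N D) *\<^sub>R D) \<le> dual_norm N M"
    by (intro inner_le_dual_norm assms) (simp add: is_norm_normalize[OF assms])
  moreover have "N D > 0" using False by (rule is_norm_pos[OF assms])
  ultimately show ?thesis by (simp add: field_simps)
qed (simp add: is_norm_zero[OF assms])

lemma dual_norm_scaleR_le:
  assumes "is_norm N"
  shows "dual_norm N (c *\<^sub>R M) \<le> \<bar>c\<bar> * dual_norm N M"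
proof (rule dual_norm_le[OF assms])
  fix D assume "N D \<le> 1"
  have "(c *\<^sub>R M) \<bullet> D = M \<bullet> (c *\<^sub>R D)" by simp
  also have "\<dots> \<le> dual_norm N M * (\<bar>c\<bar> * N D)"
    using inner_le_dual_norm_mult[OF assms] is_norm_scaleR[OF assms] by metis
  also have "\<dots> = (\<bar>c\<bar> * dual_norm N M) * N D" by simp
  also have "\<dots> \<le> \<bar>c\<bar> * dual_norm N M"
    using \<open>N D \<le> 1\<close> dual_norm_nonneg[OF assms, of M] by (simp add: mult_left_le)
  finally show "(c *\<^sub>R M) \<bullet> D \<le> \<bar>c\<bar> * dual_norm N M" .
qed

lemma is_norm_dual_norm:
  assumes "is_norm N"
  shows "is_norm (dual_norm N)"
proof -
  have eq_0: "dual_norm N M = 0 \<longleftrightarrow> M = 0" for M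
  proof
    assume "dual_norm N M = 0"
    then have "M \<bullet> M \<le> 0" using inner_le_dual_norm_mult[OF assms, of M M] by simp
    then show "M = 0" by (metis inner_gt_zero_iff not_le)
  qed (use dual_norm_le[OF assms, of 0 0] dual_norm_nonneg[OF assms, of 0] in simp)
  have scaleR: "dual_norm N (c *\<^sub>R M) = \<bar>c\<bar> * dual_norm N M" for c M
  proof (cases "c = 0")
    case False
    have "dual_norm N M \<le> \<bar>1 / c\<bar> * dual_norm N (c *\<^sub>R M)"
      using dual_norm_scaleR_le[OF assms, of "1 / c" "c *\<^sub>R M"] False by simp
    then have "\<bar>c\<bar> * dual_norm N M \<le> dual_norm N (c *\<^sub>R M)"
      using False by (simp add: field_simps)
    then show ?thesis using dual_norm_scaleR_le[OF assms, of c M] by simp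
  qed (simp add: eq_0)
  have triangle: "dual_norm N (x + y) \<le> dual_norm N x + dual_norm N y" for x y
    by (rule dual_norm_le[OF assms])
      (use inner_le_dual_norm[OF assms] in \<open>fastforce simp: inner_add_left intro: add_mono\<close>)
  show ?thesis
    unfolding is_norm_def using dual_norm_nonneg[OF assms] eq_0 scaleR triangle by blast
qed

lemma is_norm_nonneg_combination:
  assumes "finite I" and norms: "\<And>i. i \<in> I \<Longrightarrow> is_norm (N i)"
    and nonneg: "\<And>i. i \<in> I \<Longrightarrow> 0 \<le> \<alpha> i" and nonzero: "\<exists>i\<in>I. \<alpha> i \<noteq> 0"
  shows "is_norm (\<lambda>x. \<Sum>i\<in>I. \<alpha> i * N i x)"
proof -
  have terms_nonneg: "0 \<le> \<alpha> i * N i x" if "i \<in> I" for i x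
    using is_norm_nonneg[OF norms] nonneg that by simp
  have eq_0: "(\<Sum>i\<in>I. \<alpha> i * N i x) = 0 \<longleftrightarrow> x = 0" for x
  proof
    assume "(\<Sum>i\<in>I. \<alpha> i * N i x) = 0"
    then have "\<forall>i\<in>I. \<alpha> i * N i x = 0"
      using sum_nonneg_eq_0_iff[OF \<open>finite I\<close>, of "\<lambda>i. \<alpha> i * N i x"] terms_nonneg by simp
    then obtain j where "j \<in> I" "N j x = 0" using nonzero by auto
    then show "x = 0" using is_norm_eq_0_iff[OF norms] by blast
  qed (simp add: is_norm_zero[OF norms])
  have "(\<Sum>i\<in>I. \<alpha> i * N i (c *\<^sub>R x)) = \<bar>c\<bar> * (\<Sum>i\<in>I. \<alpha> i * N i x)" for c x
    by (simp add: is_norm_scaleR[OF norms] sum_distrib_left mult.left_commute)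
  moreover have "(\<Sum>i\<in>I. \<alpha> i * N i (x + y)) \<le> (\<Sum>i\<in>I. \<alpha> i * N i x) + (\<Sum>i\<in>I. \<alpha> i * N i y)" for x y
    unfolding sum.distrib[symmetric] distrib_left[symmetric]
    by (intro sum_mono mult_left_mono is_norm_triangle[OF norms] nonneg)
  ultimately show ?thesis
    unfolding is_norm_def using terms_nonneg eq_0 by (simp add: sum_nonneg)
qed

lemma dual_norm_combination_le:
  assumes "finite I" and norms: "\<And>i. i \<in> I \<Longrightarrow> is_norm (N i)"
    and nonneg: "\<And>i. i \<in> I \<Longrightarrow> 0 \<le> \<alpha> i" and nonzero: "\<exists>i\<in>I. \<alpha> i \<noteq> 0"
    and unit: "\<And>i. i \<in> I \<Longrightarrow> N i (D i) \<le> 1"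
  shows "dual_norm (\<lambda>x. \<Sum>i\<in>I. \<alpha> i * dual_norm (N i) x) (\<Sum>i\<in>I. \<alpha> i *\<^sub>R D i) \<le> 1"
proof (rule dual_norm_le)
  show "is_norm (\<lambda>x. \<Sum>i\<in>I. \<alpha> i * dual_norm (N i) x)"
    using is_norm_nonneg_combination[OF \<open>finite I\<close> is_norm_dual_norm[OF norms] nonneg nonzero] .
  fix X assume X: "(\<Sum>i\<in>I. \<alpha> i * dual_norm (N i) X) \<le> 1"
  have "(\<Sum>i\<in>I. \<alpha> i *\<^sub>R D i) \<bullet> X = (\<Sum>i\<in>I. \<alpha> i * (X \<bullet> D i))"
    by (simp add: inner_commute[of _ X] inner_sum_right)
  also have "\<dots> \<le> (\<Sum>i\<in>I. \<alpha> i * dual_norm (N i) X)"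
    by (intro sum_mono mult_left_mono inner_le_dual_norm norms unit nonneg)
  finally show "(\<Sum>i\<in>I. \<alpha> i *\<^sub>R D i) \<bullet> X \<le> 1" using X by linarith
qed

lemma inner_LMO_eq:
  assumes "is_norm N" and "is_LMO N L"
  shows "M \<bullet> L M = - dual_norm N M"
proof (rule antisym)
  have "- (M \<bullet> L M) \<le> dual_norm N M"
    using inner_le_dual_norm[OF assms(1), of "- L M" M] assms
    by (simp add: is_LMO_def is_norm_minus)
  then show "- dual_norm N M \<le> M \<bullet> L M" by simp
  have "dual_norm N M \<le> - (M \<bullet> L M)"
  proof (rule dual_norm_le[OF assms(1)])
    fix D assume "N D \<le> 1"
    then have "M \<bullet> L M \<le> M \<bullet> (- D)"
      using assms unfolding is_LMO_def by (simp add: is_norm_minus del: inner_minus_right)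
    then show "M \<bullet> D \<le> - (M \<bullet> L M)" by simp
  qed
  then show "M \<bullet> L M \<le> - dual_norm N M" by simp
qed

lemma is_LMO_dual_normI:
  assumes norm: "is_norm N"
    and unit: "\<And>M. dual_norm N (L M) \<le> 1"
    and attains: "\<And>M. M \<bullet> L M \<le> - N M"
  shows "is_LMO (dual_norm N) L"
  unfolding is_LMO_def
proof (intro allI conjI impI unit)
  fix M D assume D: "dual_norm N D \<le> 1"
  have "D \<bullet> (- M) \<le> dual_norm N D * N M"
    using inner_le_dual_norm_mult[OF norm, of D "- M"] by (simp add: is_norm_minus[OF norm])
  also have "\<dots> \<le> N M"
    by (rule mult_left_le_one_le) (simp_all add: D dual_norm_nonneg is_norm_nonneg norm)
  finally show "M \<bullet> L M \<le> M \<bullet> D" using attains[of M] by (simp add: inner_commute)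
qed

theorem corollary5:
  fixes Nrm :: "nat \<Rightarrow> 'a::euclidean_space \<Rightarrow> real"
    and LMO :: "nat \<Rightarrow> 'a \<Rightarrow> 'a"
    and \<alpha> :: "nat \<Rightarrow> real"
    and n :: nat
  assumes norms: "\<forall>i<n. is_norm (Nrm i)"
    and lmos: "\<forall>i<n. is_LMO (Nrm i) (LMO i)"
    and nonneg: "\<forall>i<n. 0 \<le> \<alpha> i"
    and nonzero: "\<exists>i<n. \<alpha> i \<noteq> 0"
  shows "is_norm (dual_norm (\<lambda>M. \<Sum>i<n. \<alpha> i * dual_norm (Nrm i) M))
       \<and> is_LMO (dual_norm (\<lambda>M. \<Sum>i<n. \<alpha> i * dual_norm (Nrm i) M))
                (\<lambda>M. \<Sum>i<n. \<alpha> i *\<^sub>R LMO i M)"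
proof -
  let ?\<Phi> = "\<lambda>M. \<Sum>i<n. \<alpha> i * dual_norm (Nrm i) M"
  have \<Phi>: "is_norm ?\<Phi>"
    by (intro is_norm_nonneg_combination) (use norms nonneg nonzero is_norm_dual_norm in auto)
  have "is_LMO (dual_norm ?\<Phi>) (\<lambda>M. \<Sum>i<n. \<alpha> i *\<^sub>R LMO i M)"
  proof (rule is_LMO_dual_normI[OF \<Phi>])
    fix M
    show "dual_norm ?\<Phi> (\<Sum>i<n. \<alpha> i *\<^sub>R LMO i M) \<le> 1"
      by (intro dual_norm_combination_le) (use norms nonneg nonzero lmos in \<open>auto simp: is_LMO_def\<close>)
    have "M \<bullet> (\<Sum>i<n. \<alpha> i *\<^sub>R LMO i M) = (\<Sum>i<n. \<alpha> i * (M \<bullet> LMO i M))"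
      by (simp add: inner_sum_right)
    also have "\<dots> = - ?\<Phi> M"
      unfolding sum_negf[symmetric] using norms lmos by (intro sum.cong) (auto simp: inner_LMO_eq)
    finally show "M \<bullet> (\<Sum>i<n. \<alpha> i *\<^sub>R LMO i M) \<le> - ?\<Phi> M" by simp
  qed
  then show ?thesis using is_norm_dual_norm[OF \<Phi>] by blast
qed

end
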